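(* Let $h>0$, $\lambda\in[0,1)$, let $\mu\in\mathcal{M}^+(h,\lambda)$, and let $g:\mathbb{R}\to[0,\infty)$ be non-decreasing with $g(0)=0$. Then $\int g^2\,d\mu\le\left(\frac{2}{1-\lambda}\right)^2\int (g(x)-g(x-h))^2\,d\mu(x).$
   Context: $\mathcal{M}^+(h,\lambda)$ denotes the class of Borel probability measures $\mu$ supported on $[0,\infty)$ such that $\mu([x+h,\infty))\le\lambda\,\mu([x,\infty))$ for all $x\ge0$. *)

theory Defs
  imports "HOL-Probability.Probability"
begin

definition Mplus :: "real \<Rightarrow> real \<Rightarrow> real measure set" where
  "Mplus h lam = {\<mu>. prob_space \<mu> \<and> sets \<mu> = sets borel \<and> measure \<mu> {..<0} = 0 \<and>
      (\<forall>x\<ge>0. measure \<mu> {x+h..} \<le> lam * measure \<mu> {x..})}"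

end

theory Submission
  imports Defs
begin

text \<open>The tail condition says that shifting \<mu> by h multiplies the measure of every upper ray
  [a,\<infinity>) or (a,\<infinity>), a \<ge> 0, by at most \<lambda>. Since the superlevel sets of a non-decreasing
  function vanishing on (-\<infinity>,0] are such rays, the layer cake formula gives
  \<integral> F(x - h) d\<mu> \<le> \<lambda> \<integral> F d\<mu> for every such F, in particular for F = g^2.
  With e = (1 - \<lambda>)/2, the pointwise inequality e(1 - e) a^2 \<le> e b^2 + (a - b)^2 for
  a = g(x), b = g(x - h) integrates to e(1 - e) A \<le> e \<lambda> A + D, where A = \<integral> g^2 d\<mu> and
  D = \<integral> (g(x) - g(x - h))^2 d\<mu>; as 1 - e - \<lambda> = e this is e^2 A \<le> D. Absorbing the term
  e \<lambda> A requires A < \<infinity>, which holds for the truncations min g n; monotone convergence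
  removes the truncation.\<close>

lemma greaterThan_eq_UN_atLeast: "{a<..} = (\<Union>n. {a + 1 / real (Suc n)..})" for a :: real
proof (intro set_eqI iffI)
  fix z assume "z \<in> {a<..}"
  then obtain n where "inverse (real (Suc n)) < z - a"
    using reals_Archimedean[of "z - a"] by auto
  then have "a + 1 / real (Suc n) \<le> z" by (simp add: inverse_eq_divide)
  then show "z \<in> (\<Union>n. {a + 1 / real (Suc n)..})" by blast
next
  fix z assume "z \<in> (\<Union>n. {a + 1 / real (Suc n)..})"
  then obtain n where "a + 1 / real (Suc n) \<le> z" by auto
  moreover have "0 < 1 / real (Suc n)" by simp
  ultimately have "a < z" by linarith
  then show "z \<in> {a<..}" by simp
qed

lemma measure_atLeast_tendsto_greaterThan:
  fixes M :: "real measure"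
  assumes "finite_measure M" "sets M = sets borel"
  shows "(\<lambda>n. measure M {a + 1 / real (Suc n)..}) \<longlonglongrightarrow> measure M {a<..}"
proof -
  interpret finite_measure M by fact
  have "incseq (\<lambda>n. {a + 1 / real (Suc n)..})"
  proof (rule incseq_SucI)
    fix n :: nat
    have "1 / real (Suc (Suc n)) \<le> 1 / real (Suc n)" by (rule frac_le) auto
    then show "{a + 1 / real (Suc n)..} \<subseteq> {a + 1 / real (Suc (Suc n))..}" by auto
  qed
  moreover have "range (\<lambda>n. {a + 1 / real (Suc n)..}) \<subseteq> sets M"
    using assms(2) by (simp add: image_subset_iff)
  ultimately show ?thesis
    unfolding greaterThan_eq_UN_atLeast[of a] by (rule finite_Lim_measure_incseq[rotated])
qed

lemma tail_bound_greaterThan: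
  fixes M :: "real measure"
  assumes "finite_measure M" "sets M = sets borel"
    and tail: "\<forall>x\<ge>0. measure M {x+h..} \<le> lam * measure M {x..}" and "x \<ge> 0"
  shows "measure M {x+h<..} \<le> lam * measure M {x<..}"
proof (rule LIMSEQ_le)
  show "(\<lambda>n. measure M {x + h + 1 / real (Suc n)..}) \<longlonglongrightarrow> measure M {x+h<..}"
    using measure_atLeast_tendsto_greaterThan[OF assms(1,2)] .
  show "(\<lambda>n. lam * measure M {x + 1 / real (Suc n)..}) \<longlonglongrightarrow> lam * measure M {x<..}"
    using measure_atLeast_tendsto_greaterThan[OF assms(1,2)] by (rule tendsto_mult_left)
  have "measure M {x + h + 1 / real (Suc n)..} \<le> lam * measure M {x + 1 / real (Suc n)..}" for n
    using tail[rule_format, of "x + 1 / real (Suc n)"] \<open>x \<ge> 0\<close> by (simp add: add_ac)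
  then show "\<exists>N. \<forall>n\<ge>N. measure M {x + h + 1 / real (Suc n)..} \<le> lam * measure M {x + 1 / real (Suc n)..}"
    by blast
qed

lemma up_closed_eq_atLeast_or_greaterThan:
  fixes U :: "real set"
  assumes "U \<noteq> {}" "bdd_below U" and up: "\<And>y z. y \<in> U \<Longrightarrow> y \<le> z \<Longrightarrow> z \<in> U"
  shows "U = {Inf U..} \<or> U = {Inf U<..}"
proof (cases "Inf U \<in> U")
  case True
  then show ?thesis using up cInf_lower[OF _ assms(2)] by blast
next
  case False
  have "U = {Inf U<..}"
  proof (intro set_eqI iffI)
    fix y assume "y \<in> U"
    then show "y \<in> {Inf U<..}"
      using cInf_lower[OF _ assms(2)] False by (metis greaterThan_iff order_less_le)
  next
    fix y assume "y \<in> {Inf U<..}"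
    then obtain u where "u \<in> U" "u < y"
      using cInf_less_iff[OF assms(1,2)] by auto
    then show "y \<in> U" using up by auto
  qed
  then show ?thesis ..
qed

lemma tail_bound_up_closed:
  fixes M :: "real measure" and U :: "real set"
  assumes "finite_measure M" "sets M = sets borel"
    and tail: "\<forall>x\<ge>0. measure M {x+h..} \<le> lam * measure M {x..}"
    and up: "\<And>y z. y \<in> U \<Longrightarrow> y \<le> z \<Longrightarrow> z \<in> U" and "U \<subseteq> {0..}"
  shows "measure M {x. x - h \<in> U} \<le> lam * measure M U"
proof (cases "U = {}")
  case False
  have "bdd_below U" using \<open>U \<subseteq> {0..}\<close> by (auto intro: bdd_belowI[of _ 0])
  then have "Inf U \<ge> 0" using False \<open>U \<subseteq> {0..}\<close> by (auto intro: cInf_greatest)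
  from up_closed_eq_atLeast_or_greaterThan[OF False \<open>bdd_below U\<close> up] show ?thesis
  proof
    assume U: "U = {Inf U..}"
    have "{x. x - h \<in> U} = {Inf U + h..}" by (subst U) auto
    then show ?thesis using tail \<open>Inf U \<ge> 0\<close> U by auto
  next
    assume U: "U = {Inf U<..}"
    have "{x. x - h \<in> U} = {Inf U + h<..}" by (subst U) auto
    then show ?thesis
      using tail_bound_greaterThan[OF assms(1-3) \<open>Inf U \<ge> 0\<close>] U by auto
  qed
qed simp

lemma borel_measurable_emeasure_superlevel:
  fixes f :: "'a \<Rightarrow> real"
  assumes "sigma_finite_measure M" and [measurable]: "f \<in> borel_measurable M"
  shows "(\<lambda>t. emeasure M {x \<in> space M. t < f x}) \<in> borel_measurable borel"
proof -
  interpret sigma_finite_measure M by fact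
  have "emeasure M {x \<in> space M. t < f x} = (\<integral>\<^sup>+x. indicator {x \<in> space M. t < f x} x \<partial>M)" for t
    by (rule nn_integral_indicator[symmetric]) measurable
  moreover have "(\<lambda>t. \<integral>\<^sup>+x. indicator {x \<in> space M. t < f x} x \<partial>M) \<in> borel_measurable borel"
  proof (rule borel_measurable_nn_integral)
    have "case_prod (\<lambda>t x. indicator {x \<in> space M. t < f x} x :: ennreal) =
        indicator {p \<in> space (borel \<Otimes>\<^sub>M M). fst p < f (snd p)}"
      by (auto simp: fun_eq_iff indicator_def space_pair_measure)
    then show "case_prod (\<lambda>t x. indicator {x \<in> space M. t < f x} x :: ennreal)
        \<in> borel_measurable (borel \<Otimes>\<^sub>M M)"
      by simp
  qed
  ultimately show ?thesis by simp
qed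

lemma nn_integral_layer_cake:
  assumes "sigma_finite_measure M" and f[measurable]: "f \<in> borel_measurable M"
    and nonneg: "\<And>x. x \<in> space M \<Longrightarrow> 0 \<le> f x"
  shows "(\<integral>\<^sup>+x. ennreal (f x) \<partial>M) = (\<integral>\<^sup>+t\<in>{0..}. emeasure M {x \<in> space M. t < f x} \<partial>lborel)"
proof -
  interpret pair_sigma_finite lborel M
    by (intro pair_sigma_finite.intro sigma_finite_lborel assms(1))
  have "(\<integral>\<^sup>+x. ennreal (f x) \<partial>M) = (\<integral>\<^sup>+x. (\<integral>\<^sup>+t. indicator {0..<f x} t \<partial>lborel) \<partial>M)"
    using nonneg by (intro nn_integral_cong) simp
  also have "\<dots> = (\<integral>\<^sup>+t. (\<integral>\<^sup>+x. indicator {0..<f x} t \<partial>M) \<partial>lborel)"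
  proof (rule Fubini'[where f = "\<lambda>t x. indicator {0..<f x} t"])
    have "(\<lambda>(t, x). indicator {0..<f x} t :: ennreal) =
        (\<lambda>p. if 0 \<le> fst p \<and> fst p < f (snd p) then 1 else 0)"
      by (auto simp: fun_eq_iff indicator_def)
    then show "(\<lambda>(t, x). indicator {0..<f x} t :: ennreal) \<in> borel_measurable (lborel \<Otimes>\<^sub>M M)"
      by simp
  qed
  also have "\<dots> = (\<integral>\<^sup>+t\<in>{0..}. emeasure M {x \<in> space M. t < f x} \<partial>lborel)"
  proof (rule nn_integral_cong)
    fix t :: real
    have "(\<integral>\<^sup>+x. indicator {0..<f x} t \<partial>M)
        = (\<integral>\<^sup>+x. indicator {0..} t * indicator {x \<in> space M. t < f x} x \<partial>M)"
      by (intro nn_integral_cong) (auto simp: indicator_def)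
    also have "\<dots> = emeasure M {x \<in> space M. t < f x} * indicator {0..} t"
      by (simp add: nn_integral_cmult mult.commute)
    finally show "(\<integral>\<^sup>+x. indicator {0..<f x} t \<partial>M) = emeasure M {x \<in> space M. t < f x} * indicator {0..} t" .
  qed
  finally show ?thesis .
qed

lemma nn_integral_shift_le:
  fixes M :: "real measure" and F :: "real \<Rightarrow> real"
  assumes M: "finite_measure M" "sets M = sets borel"
    and tail: "\<forall>x\<ge>0. measure M {x+h..} \<le> lam * measure M {x..}" and "0 \<le> lam"
    and F: "mono F" "\<And>y. y \<le> 0 \<Longrightarrow> F y = 0"
  shows "(\<integral>\<^sup>+x. ennreal (F (x - h)) \<partial>M) \<le> ennreal lam * (\<integral>\<^sup>+x. ennreal (F x) \<partial>M)"
proof -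
  interpret finite_measure M by fact
  have space: "space M = UNIV" using sets_eq_imp_space_eq[OF M(2)] by simp
  have [measurable]: "F \<in> borel_measurable borel" using F(1) by (rule borel_measurable_mono)
  have [measurable]: "F \<in> borel_measurable M" "(\<lambda>x. F (x - h)) \<in> borel_measurable M"
    unfolding measurable_cong_sets[OF M(2) refl] by measurable
  have nonneg: "0 \<le> F y" for y
    using monoD[OF F(1), of "min y 0" y] F(2)[of "min y 0"] by simp
  have superlevel: "emeasure M {x \<in> space M. t < F (x - h)} \<le> ennreal lam * emeasure M {x \<in> space M. t < F x}"
    if "0 \<le> t" for t
  proof -
    have "measure M {x. x - h \<in> {y. t < F y}} \<le> lam * measure M {y. t < F y}"
    proof (rule tail_bound_up_closed[OF M tail])
      show "z \<in> {y. t < F y}" if "y \<in> {y. t < F y}" "y \<le> z" for y z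
        using that monoD[OF F(1)] by fastforce
      show "{y. t < F y} \<subseteq> {0..}"
      proof
        fix y assume "y \<in> {y. t < F y}"
        then show "y \<in> {0..}" using F(2)[of y] \<open>0 \<le> t\<close> by (cases "y \<le> 0") auto
      qed
    qed
    then show ?thesis
      using \<open>0 \<le> lam\<close> by (simp add: space emeasure_eq_measure ennreal_mult[symmetric] ennreal_leI)
  qed
  have [measurable]: "(\<lambda>t. emeasure M {x \<in> space M. t < F x}) \<in> borel_measurable borel"
    by (rule borel_measurable_emeasure_superlevel) (unfold_locales, measurable)
  have "(\<integral>\<^sup>+x. ennreal (F (x - h)) \<partial>M) = (\<integral>\<^sup>+t\<in>{0..}. emeasure M {x \<in> space M. t < F (x - h)} \<partial>lborel)"
    using nonneg by (intro nn_integral_layer_cake) (unfold_locales, measurable)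
  also have "\<dots> \<le> (\<integral>\<^sup>+t\<in>{0..}. ennreal lam * emeasure M {x \<in> space M. t < F x} \<partial>lborel)"
    using superlevel by (intro nn_integral_mono) (auto simp: indicator_def)
  also have "\<dots> = ennreal lam * (\<integral>\<^sup>+t\<in>{0..}. emeasure M {x \<in> space M. t < F x} \<partial>lborel)"
    by (subst nn_integral_cmult[symmetric]) (simp_all add: mult.assoc)
  also have "\<dots> = ennreal lam * (\<integral>\<^sup>+x. ennreal (F x) \<partial>M)"
    using nonneg by (subst nn_integral_layer_cake) (unfold_locales, measurable)
  finally show ?thesis .
qed

lemma young_square_le:
  fixes a b e :: real
  assumes "0 \<le> e"
  shows "e * (1 - e) * a\<^sup>2 \<le> e * b\<^sup>2 + (a - b)\<^sup>2"
proof -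
  have "e * b\<^sup>2 + (a - b)\<^sup>2 - e * (1 - e) * a\<^sup>2 = (e * a - (a - b))\<^sup>2 + e * (a - b)\<^sup>2"
    by (simp add: power2_eq_square algebra_simps)
  also have "\<dots> \<ge> 0" using assms by simp
  finally show ?thesis by simp
qed

lemma ennreal_absorb_le:
  assumes "A \<noteq> \<infinity>" "ennreal c * A \<le> ennreal l * A + D" "0 \<le> l" "l \<le> c"
  shows "ennreal (c - l) * A \<le> D"
proof -
  have "ennreal l * A + ennreal (c - l) * A = ennreal c * A"
    using assms(3,4) by (simp flip: distrib_right ennreal_plus)
  with assms(2) have "ennreal l * A + ennreal (c - l) * A \<le> ennreal l * A + D" by simp
  moreover have "ennreal l * A \<noteq> \<infinity>" using assms(1) by (simp add: ennreal_mult_eq_top_iff)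
  ultimately show ?thesis by (simp add: ennreal_add_left_cancel_le)
qed

lemma nn_integral_square_le_diff_bounded:
  fixes M :: "real measure" and g :: "real \<Rightarrow> real"
  assumes M: "finite_measure M" "sets M = sets borel"
    and tail: "\<forall>x\<ge>0. measure M {x+h..} \<le> lam * measure M {x..}" and lam: "0 \<le> lam" "lam < 1"
    and g: "\<And>x. 0 \<le> g x" "mono g" "g 0 = 0" and bounded: "\<And>x. g x \<le> B"
  shows "(\<integral>\<^sup>+x. ennreal ((g x)\<^sup>2) \<partial>M)
           \<le> ennreal ((2 / (1 - lam))\<^sup>2) * (\<integral>\<^sup>+x. ennreal ((g x - g (x - h))\<^sup>2) \<partial>M)"
proof -
  interpret finite_measure M by fact
  have [measurable]: "g \<in> borel_measurable borel" using g(2) by (rule borel_measurable_mono)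
  have [measurable]: "g \<in> borel_measurable M" "(\<lambda>x. g (x - h)) \<in> borel_measurable M"
    unfolding measurable_cong_sets[OF M(2) refl] by measurable
  define e where "e = (1 - lam) / 2"
  have e: "0 < e" "lam \<le> 1 - e" "e * (1 - e) - e * lam = e\<^sup>2"
    using lam by (auto simp: e_def power2_eq_square field_simps)
  define A where "A = (\<integral>\<^sup>+x. ennreal ((g x)\<^sup>2) \<partial>M)"
  define D where "D = (\<integral>\<^sup>+x. ennreal ((g x - g (x - h))\<^sup>2) \<partial>M)"
  have shifted: "(\<integral>\<^sup>+x. ennreal ((g (x - h))\<^sup>2) \<partial>M) \<le> ennreal lam * A"
    unfolding A_def
  proof (rule nn_integral_shift_le[OF M tail lam(1), where F = "\<lambda>y. (g y)\<^sup>2"])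
    show "mono (\<lambda>y. (g y)\<^sup>2)" using g(1,2) by (auto intro!: monoI power_mono dest: monoD)
    show "(g y)\<^sup>2 = 0" if "y \<le> 0" for y using g monoD[OF g(2) that] by (simp add: order_antisym)
  qed
  have "ennreal (e * (1 - e)) * A = (\<integral>\<^sup>+x. ennreal (e * (1 - e) * (g x)\<^sup>2) \<partial>M)"
    by (simp add: A_def nn_integral_cmult[symmetric] ennreal_mult'')
  also have "\<dots> \<le> (\<integral>\<^sup>+x. ennreal e * ennreal ((g (x - h))\<^sup>2) + ennreal ((g x - g (x - h))\<^sup>2) \<partial>M)"
    using young_square_le[of e] e
    by (intro nn_integral_mono) (simp flip: ennreal_mult ennreal_plus add: ennreal_leI)
  also have "\<dots> = ennreal e * (\<integral>\<^sup>+x. ennreal ((g (x - h))\<^sup>2) \<partial>M) + D"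
    by (simp add: D_def nn_integral_add nn_integral_cmult)
  also have "\<dots> \<le> ennreal (e * lam) * A + D"
    using shifted e lam by (simp add: ennreal_mult mult.assoc mult_left_mono add_right_mono)
  finally have "ennreal (e * (1 - e)) * A \<le> ennreal (e * lam) * A + D" .
  moreover have "A \<noteq> \<infinity>"
  proof -
    have "A \<le> (\<integral>\<^sup>+x. ennreal (B\<^sup>2) \<partial>M)"
      unfolding A_def using g(1) bounded by (intro nn_integral_mono ennreal_leI power_mono) auto
    then show ?thesis by (auto simp: top_unique ennreal_mult_eq_top_iff)
  qed
  ultimately have "ennreal (e\<^sup>2) * A \<le> D"
    using ennreal_absorb_le[of A "e * (1 - e)" "e * lam" D] e lam by simp
  have "A = ennreal (1 / e\<^sup>2) * (ennreal (e\<^sup>2) * A)"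
    using e by (simp flip: mult.assoc ennreal_mult)
  also have "\<dots> \<le> ennreal (1 / e\<^sup>2) * D"
    using \<open>ennreal (e\<^sup>2) * A \<le> D\<close> by (rule mult_left_mono) simp
  also have "1 / e\<^sup>2 = (2 / (1 - lam))\<^sup>2" by (simp add: e_def power_divide)
  finally show ?thesis unfolding A_def D_def .
qed

lemma nn_integral_square_eq_SUP_min:
  fixes g :: "'a \<Rightarrow> real"
  assumes [measurable]: "g \<in> borel_measurable M" and nonneg: "\<And>x. 0 \<le> g x"
  shows "(\<integral>\<^sup>+x. ennreal ((g x)\<^sup>2) \<partial>M) = (SUP n. \<integral>\<^sup>+x. ennreal ((min (g x) (real n))\<^sup>2) \<partial>M)"
proof -
  have "ennreal ((g x)\<^sup>2) = (SUP n. ennreal ((min (g x) (real n))\<^sup>2))" for x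
  proof (rule antisym)
    obtain n where "g x \<le> real n" using real_arch_simple by blast
    then show "ennreal ((g x)\<^sup>2) \<le> (SUP n. ennreal ((min (g x) (real n))\<^sup>2))"
      by (intro SUP_upper2[of n]) simp_all
    show "(SUP n. ennreal ((min (g x) (real n))\<^sup>2)) \<le> ennreal ((g x)\<^sup>2)"
      using nonneg by (intro SUP_least ennreal_leI power_mono) auto
  qed
  then have "(\<integral>\<^sup>+x. ennreal ((g x)\<^sup>2) \<partial>M) = (\<integral>\<^sup>+x. (SUP n. ennreal ((min (g x) (real n))\<^sup>2)) \<partial>M)"
    by simp
  also have "\<dots> = (SUP n. \<integral>\<^sup>+x. ennreal ((min (g x) (real n))\<^sup>2) \<partial>M)"
  proof (rule nn_integral_monotone_convergence_SUP)
    show "incseq (\<lambda>n x. ennreal ((min (g x) (real n))\<^sup>2))"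
      using nonneg by (intro incseq_SucI le_funI ennreal_leI power_mono) auto
  qed measurable
  finally show ?thesis .
qed

theorem lemma2p1:
  fixes h lam :: real and \<mu> :: "real measure" and g :: "real \<Rightarrow> real"
  assumes "h > 0" and "0 \<le> lam" and "lam < 1"
    and "\<mu> \<in> Mplus h lam"
    and "\<And>x. g x \<ge> 0" and "mono g" and "g 0 = 0"
  shows "(\<integral>\<^sup>+ x. ennreal ((g x)\<^sup>2) \<partial>\<mu>)
           \<le> ennreal ((2 / (1 - lam))\<^sup>2) * (\<integral>\<^sup>+ x. ennreal ((g x - g (x - h))\<^sup>2) \<partial>\<mu>)"
proof -
  from \<open>\<mu> \<in> Mplus h lam\<close> have \<mu>: "finite_measure \<mu>" "sets \<mu> = sets borel"
    and tail: "\<forall>x\<ge>0. measure \<mu> {x+h..} \<le> lam * measure \<mu> {x..}"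
    unfolding Mplus_def by (auto intro: prob_space.finite_measure)
  have "g \<in> borel_measurable \<mu>"
    using borel_measurable_mono[OF \<open>mono g\<close>] measurable_cong_sets[OF \<mu>(2) refl] by blast
  then have "(\<integral>\<^sup>+ x. ennreal ((g x)\<^sup>2) \<partial>\<mu>) = (SUP n. \<integral>\<^sup>+x. ennreal ((min (g x) (real n))\<^sup>2) \<partial>\<mu>)"
    using assms(5) by (rule nn_integral_square_eq_SUP_min)
  also have "\<dots> \<le> ennreal ((2 / (1 - lam))\<^sup>2) * (\<integral>\<^sup>+ x. ennreal ((g x - g (x - h))\<^sup>2) \<partial>\<mu>)"
  proof (rule SUP_least)
    fix n :: nat
    have "mono (\<lambda>x. min (g x) (real n))"
      using \<open>mono g\<close> by (intro monoI min.mono order_refl) (simp add: monoD)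
    with assms(2,3,5,7) have "(\<integral>\<^sup>+x. ennreal ((min (g x) (real n))\<^sup>2) \<partial>\<mu>)
        \<le> ennreal ((2 / (1 - lam))\<^sup>2) * (\<integral>\<^sup>+x. ennreal ((min (g x) (real n) - min (g (x - h)) (real n))\<^sup>2) \<partial>\<mu>)"
      by (intro nn_integral_square_le_diff_bounded[OF \<mu> tail, where B = "real n"]) auto
    also have "\<dots> \<le> ennreal ((2 / (1 - lam))\<^sup>2) * (\<integral>\<^sup>+ x. ennreal ((g x - g (x - h))\<^sup>2) \<partial>\<mu>)"
    proof (intro mult_left_mono nn_integral_mono ennreal_leI power_mono)
      fix x
      have "g (x - h) \<le> g x" using \<open>mono g\<close> \<open>h > 0\<close> by (simp add: monoD)
      then show "0 \<le> min (g x) (real n) - min (g (x - h)) (real n)"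
        "min (g x) (real n) - min (g (x - h)) (real n) \<le> g x - g (x - h)"
        by (auto simp: min_def)
    qed simp
    finally show "(\<integral>\<^sup>+x. ennreal ((min (g x) (real n))\<^sup>2) \<partial>\<mu>)
        \<le> ennreal ((2 / (1 - lam))\<^sup>2) * (\<integral>\<^sup>+ x. ennreal ((g x - g (x - h))\<^sup>2) \<partial>\<mu>)" .
  qed
  finally show ?thesis .
qed

end
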